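(* There exist constants $K_1,K_2$ such that for every $\varepsilon>0$, $$\sum_{n\le x}\frac{1}{\beta(n)}=K_1\log x+K_2+O\!\left(x^{-1+\varepsilon}\right)\qquad (x\to\infty),$$ where $K_1=\prod_p\left(1-\frac1p\right)\left(1+\sum_{a=1}^{\infty}\frac{1}{\beta(p^a)}\right)$, the product being over all primes.
   Context: $\beta$ is the multiplicative arithmetic function with $\beta(1)=1$ and $\beta(p^a)=\frac{p^{a+1}+(-1)^a}{p+1}$ for every prime power $p^a$ ($a\ge1$); equivalently $\beta(n)=\sum_{d\mid n}d\,\lambda(n/d)$ with $\lambda$ the Liouville function. *)

theory Defs
  imports "HOL-Analysis.Analysis" "HOL-Library.Landau_Symbols"
    "HOL-Computational_Algebra.Primes"
begin

definition liouville :: "nat \<Rightarrow> real" where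
  "liouville n = (-1) ^ size (prime_factorization n)"

definition beta :: "nat \<Rightarrow> real" where
  "beta n = (\<Sum>d \<in> {d. d dvd n}. real d * liouville (n div d))"

definition K1_factor :: "nat \<Rightarrow> real" where
  "K1_factor p = (1 - 1 / real p) * (1 + (\<Sum>a. 1 / beta (p ^ Suc a)))"

end

theory Submission
  imports Defs
begin

text \<open>
  Mean value of 1/beta.  Put G(d) = g(d)/d, where n/beta(n) is the divisor sum of the
  multiplicative function g.  Then

    sum_{n<=x} 1/beta(n) = sum_{d<=x} G(d) H(floor(x/d)),     H(m) = 1 + 1/2 + ... + 1/m,

  and H(floor(x/d)) = log x - log d + gamma + O(d/x).  The local factors of g satisfy
  |g(p^a)| <= 9 p^-a, so by Rankin's trick sum |g(d)| d^-delta converges for every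
  delta > 0; this controls both the error O(d/x) summed over d <= x and the tails
  beyond x of the series K1 = sum G(d) and K2 = sum G(d) (gamma - log d).  The result is
  an error O(x^(2 delta - 1)) for every delta in (0, 1/2].  Finally K1 is identified
  with the Euler product of the statement.
\<close>

definition local_prod :: "(nat \<Rightarrow> nat \<Rightarrow> 'a::comm_monoid_mult) \<Rightarrow> nat \<Rightarrow> 'a" where
  "local_prod F d = (\<Prod>p\<in>prime_factors d. F p (multiplicity p d))"

text \<open>The positive integers whose prime factors lie in P and whose p-adic valuations are
  bounded by A p; for finite P this is the index set of a finite Euler product.\<close>

definition bounded_smooth :: "nat set \<Rightarrow> (nat \<Rightarrow> nat) \<Rightarrow> nat set" where
  "bounded_smooth P A = {d. d > 0 \<and> prime_factors d \<subseteq> P \<and> (\<forall>p\<in>P. multiplicity p d \<le> A p)}"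

lemma local_prod_prime_power:
  assumes p: "prime p"
  shows "local_prod F (p ^ a) = (if a = 0 then 1 else F p a)"
proof (cases "a = 0")
  case False
  moreover have "prime_factors (p ^ a) = {p}"
    using False p by (simp add: prime_factorization_prime_power)
  moreover have "multiplicity p (p ^ a) = a"
    using p prime_gt_1_nat[OF p] by (simp add: multiplicity_same_power')
  ultimately show ?thesis by (simp add: local_prod_def)
qed (simp add: local_prod_def)

lemma local_prod_extend:
  assumes "finite P" "prime_factors d \<subseteq> P" "\<And>p. p \<in> P \<Longrightarrow> prime p" "\<And>p. F p 0 = 1"
  shows "local_prod F d = (\<Prod>p\<in>P. F p (multiplicity p d))"
  unfolding local_prod_def
  by (rule prod.mono_neutral_left[OF assms(1,2)]) (use assms(3,4) in \<open>auto simp: prime_factors_multiplicity\<close>)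

lemma prod_prime_powers_pos:
  "finite P \<Longrightarrow> (\<And>p. p \<in> P \<Longrightarrow> prime p) \<Longrightarrow> (\<Prod>p\<in>P. p ^ e p) > (0::nat)"
  by (simp add: prime_gt_0_nat prod_pos)

lemma prod_prime_powers_eq:
  assumes "finite P" "prime_factors d \<subseteq> P" "\<And>p. p \<in> P \<Longrightarrow> prime p" "(d::nat) > 0"
  shows "(\<Prod>p\<in>P. p ^ multiplicity p d) = d"
proof -
  have "(\<Prod>p\<in>P. p ^ multiplicity p d) = (\<Prod>p\<in>prime_factors d. p ^ multiplicity p d)"
    by (rule prod.mono_neutral_right[OF assms(1,2)]) (use assms(3) in \<open>auto simp: prime_factors_multiplicity\<close>)
  also have "\<dots> = d" using assms(4) prime_factorization_nat[of d] by auto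
  finally show ?thesis .
qed

lemma multiplicity_prod_of_prime_powers:
  assumes "finite P" "\<And>p. p \<in> P \<Longrightarrow> prime p" "prime q"
  shows "multiplicity q (\<Prod>p\<in>P. p ^ e p) = (if q \<in> P then e q else 0)"
  by (rule multiplicity_prod_prime_powers) (use assms in auto)

lemma bounded_smooth_bij:
  assumes P: "finite P" "\<And>p. p \<in> P \<Longrightarrow> prime p"
  shows "bij_betw (\<lambda>e. \<Prod>p\<in>P. p ^ e p) (PiE P (\<lambda>p. {..A p})) (bounded_smooth P A)"
proof (rule bij_betw_byWitness[where f' = "\<lambda>d. restrict (\<lambda>p. multiplicity p d) P"])
  show "\<forall>e\<in>PiE P (\<lambda>p. {..A p}). restrict (\<lambda>p. multiplicity p (\<Prod>p\<in>P. p ^ e p)) P = e"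
  proof (intro ballI ext)
    fix e q assume e: "e \<in> PiE P (\<lambda>p. {..A p})"
    show "restrict (\<lambda>p. multiplicity p (\<Prod>p\<in>P. p ^ e p)) P q = e q"
      using multiplicity_prod_of_prime_powers[OF P, of q e] P(2)[of q] PiE_arb[OF e, of q] by auto
  qed
  show "\<forall>d\<in>bounded_smooth P A. (\<Prod>p\<in>P. p ^ restrict (\<lambda>p. multiplicity p d) P p) = d"
    using prod_prime_powers_eq[OF P(1) _ P(2)] by (auto simp: bounded_smooth_def cong: prod.cong)
  show "(\<lambda>e. \<Prod>p\<in>P. p ^ e p) ` PiE P (\<lambda>p. {..A p}) \<subseteq> bounded_smooth P A"
  proof clarify
    fix e assume e: "e \<in> PiE P (\<lambda>p. {..A p})"
    note mult = multiplicity_prod_of_prime_powers[OF P, of _ e]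
    have "prime_factors (\<Prod>p\<in>P. p ^ e p) \<subseteq> P"
    proof
      fix q assume "q \<in> prime_factors (\<Prod>p\<in>P. p ^ e p)"
      then have "prime q" "multiplicity q (\<Prod>p\<in>P. p ^ e p) > 0"
        by (auto simp: prime_factors_multiplicity)
      then show "q \<in> P" using mult by (auto split: if_splits)
    qed
    then show "(\<Prod>p\<in>P. p ^ e p) \<in> bounded_smooth P A"
      using prod_prime_powers_pos[OF P, of e] mult P(2) e by (auto simp: bounded_smooth_def)
  qed
  show "(\<lambda>d. restrict (\<lambda>p. multiplicity p d) P) ` bounded_smooth P A \<subseteq> PiE P (\<lambda>p. {..A p})"
    by (auto simp: bounded_smooth_def)
qed

lemma sum_bounded_smooth:
  fixes F :: "nat \<Rightarrow> nat \<Rightarrow> 'a::comm_semiring_1"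
  assumes P: "finite P" "\<And>p. p \<in> P \<Longrightarrow> prime p" and F: "\<And>p. F p 0 = 1"
  shows "(\<Sum>d\<in>bounded_smooth P A. local_prod F d) = (\<Prod>p\<in>P. \<Sum>a\<le>A p. F p a)"
proof -
  have "(\<Sum>d\<in>bounded_smooth P A. local_prod F d)
          = (\<Sum>e\<in>PiE P (\<lambda>p. {..A p}). local_prod F (\<Prod>p\<in>P. p ^ e p))"
    by (rule sum.reindex_bij_betw[OF bounded_smooth_bij[OF P], symmetric])
  also have "\<dots> = (\<Sum>e\<in>PiE P (\<lambda>p. {..A p}). \<Prod>p\<in>P. F p (e p))"
  proof (rule sum.cong[OF refl])
    fix e assume e: "e \<in> PiE P (\<lambda>p. {..A p})"
    have "(\<Prod>p\<in>P. p ^ e p) \<in> bounded_smooth P A"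
      using bij_betwE[OF bounded_smooth_bij[OF P]] e by blast
    then have "local_prod F (\<Prod>p\<in>P. p ^ e p) = (\<Prod>q\<in>P. F q (multiplicity q (\<Prod>p\<in>P. p ^ e p)))"
      using P F by (intro local_prod_extend) (auto simp: bounded_smooth_def)
    also have "\<dots> = (\<Prod>q\<in>P. F q (e q))"
      using multiplicity_prod_of_prime_powers[OF P] P(2) by (intro prod.cong) auto
    finally show "local_prod F (\<Prod>p\<in>P. p ^ e p) = (\<Prod>p\<in>P. F p (e p))" .
  qed
  also have "\<dots> = (\<Prod>p\<in>P. \<Sum>a\<le>A p. F p a)"
    by (rule prod_sum_PiE[symmetric]) (use P in auto)
  finally show ?thesis .
qed

lemma finite_bounded_smooth:
  assumes "finite P" "\<And>p. p \<in> P \<Longrightarrow> prime p"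
  shows "finite (bounded_smooth P A)"
  using bij_betw_finite[OF bounded_smooth_bij[OF assms]] by (auto intro: finite_PiE assms(1))

lemma divisors_eq_bounded_smooth:
  assumes n: "n > (0::nat)"
  shows "{d. d dvd n} = bounded_smooth (prime_factors n) (\<lambda>p. multiplicity p n)"
proof (intro equalityI subsetI)
  fix d assume "d \<in> {d. d dvd n}"
  then have d: "d dvd n" "d > 0" using n by (auto intro: Nat.gr0I)
  then show "d \<in> bounded_smooth (prime_factors n) (\<lambda>p. multiplicity p n)"
    using n by (auto simp: bounded_smooth_def prime_factors_dvd intro: dvd_trans dvd_imp_multiplicity_le)
next
  fix d assume "d \<in> bounded_smooth (prime_factors n) (\<lambda>p. multiplicity p n)"
  then have d: "d > 0" "prime_factors d \<subseteq> prime_factors n"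
    "\<forall>p\<in>prime_factors n. multiplicity p d \<le> multiplicity p n"
    by (auto simp: bounded_smooth_def)
  have "multiplicity p d \<le> multiplicity p n" if p: "prime p" for p
  proof (cases "p \<in> prime_factors n")
    case False
    then have "multiplicity p d = 0" using d(2) p by (auto simp: prime_factors_multiplicity)
    then show ?thesis by simp
  qed (use d in auto)
  then have "d dvd n" using d(1) by (intro multiplicity_le_imp_dvd) auto
  then show "d \<in> {d. d dvd n}" by simp
qed

lemma divisor_sum_local_prod:
  fixes F :: "nat \<Rightarrow> nat \<Rightarrow> 'a::comm_semiring_1"
  assumes n: "n > 0" and F: "\<And>p. F p 0 = 1"
  shows "(\<Sum>d | d dvd n. local_prod F d) = local_prod (\<lambda>p v. \<Sum>a\<le>v. F p a) n"
proof -
  have "(\<Sum>d | d dvd n. local_prod F d) = (\<Prod>p\<in>prime_factors n. \<Sum>a\<le>multiplicity p n. F p a)"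
    unfolding divisors_eq_bounded_smooth[OF n]
    by (rule sum_bounded_smooth) (auto simp: F in_prime_factors_imp_prime)
  then show ?thesis by (simp add: local_prod_def)
qed

text \<open>Every positive d < N is N-smooth with all valuations at most N (indeed at most log_2 d);
  this lets a finite Euler product over the primes below N dominate the initial segment
  of a Dirichlet series.\<close>

lemma small_in_bounded_smooth:
  fixes d N A :: nat
  assumes d: "0 < d" "d < N" and NA: "N \<le> A"
  shows "d \<in> bounded_smooth {p. prime p \<and> p < N} (\<lambda>_. A)"
proof -
  have "prime_factors d \<subseteq> {p. prime p \<and> p < N}"
    using d by (auto simp: prime_factors_dvd dest!: dvd_imp_le)
  moreover have "multiplicity p d \<le> A" if p: "prime p" for p
  proof -
    have "p ^ multiplicity p d \<le> d" using d by (auto intro: dvd_imp_le multiplicity_dvd)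
    moreover have "(2::nat) ^ multiplicity p d \<le> p ^ multiplicity p d"
      using p prime_ge_2_nat by (intro power_mono) auto
    moreover have "multiplicity p d < 2 ^ multiplicity p d" by simp
    ultimately show ?thesis using d NA by linarith
  qed
  ultimately show ?thesis using d by (auto simp: bounded_smooth_def)
qed

lemma real_prime_factorization:
  assumes "d > 0"
  shows "real d = (\<Prod>p\<in>prime_factors d. real p ^ multiplicity p d)"
proof -
  have "real d = real (\<Prod>p\<in>prime_factors d. p ^ multiplicity p d)"
    using prime_factorization_nat[OF assms] by simp
  then show ?thesis by simp
qed

lemma liouville_div_local_prod:
  assumes "e > 0"
  shows "liouville e / real e = local_prod (\<lambda>p a. (-1 / real p) ^ a) e"
proof -
  have "size (prime_factorization e) = (\<Sum>p\<in>prime_factors e. multiplicity p e)"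
    unfolding size_multiset_overloaded_eq
    by (rule sum.cong) (auto simp: count_prime_factorization_prime in_prime_factors_imp_prime)
  then have "liouville e = (\<Prod>p\<in>prime_factors e. (-1::real) ^ multiplicity p e)"
    unfolding liouville_def by (simp add: power_sum)
  then have "liouville e / real e
      = (\<Prod>p\<in>prime_factors e. (-1::real) ^ multiplicity p e / real p ^ multiplicity p e)"
    unfolding real_prime_factorization[OF assms] by (simp add: prod_dividef)
  also have "\<dots> = local_prod (\<lambda>p a. (-1 / real p) ^ a) e"
    unfolding local_prod_def by (intro prod.cong refl power_divide[symmetric])
  finally show ?thesis .
qed

text \<open>Reindexing d to n/d in the definition: beta(n) = n * sum over e dividing n of lambda(e)/e.\<close>

lemma beta_divisor_form:
  assumes n: "n > 0"
  shows "beta n = real n * (\<Sum>e | e dvd n. liouville e / real e)"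
proof -
  have "beta n = (\<Sum>e | e dvd n. real (n div e) * liouville e)"
    unfolding beta_def
    by (rule sum.reindex_bij_witness[where i="\<lambda>d. n div d" and j="\<lambda>d. n div d"])
       (use n in \<open>auto elim!: dvdE\<close>)
  also have "\<dots> = (\<Sum>e | e dvd n. real n * (liouville e / real e))"
    by (rule sum.cong) (auto simp: real_of_nat_div)
  finally show ?thesis by (simp add: sum_distrib_left)
qed

definition beta_loc :: "nat \<Rightarrow> nat \<Rightarrow> real" where
  "beta_loc p v = (\<Sum>a\<le>v. (-1 / real p) ^ a)"

lemma beta_loc_0 [simp]: "beta_loc p 0 = 1"
  by (simp add: beta_loc_def)

lemma beta_local_prod:
  assumes n: "n > 0"
  shows "beta n = real n * local_prod beta_loc n"
proof -
  have "(\<Sum>e | e dvd n. liouville e / real e) = (\<Sum>e | e dvd n. local_prod (\<lambda>p a. (-1 / real p) ^ a) e)"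
    using n by (intro sum.cong refl liouville_div_local_prod) (auto intro: Nat.gr0I)
  also have "\<dots> = local_prod (\<lambda>p v. \<Sum>a\<le>v. (-1 / real p) ^ a) n"
    by (rule divisor_sum_local_prod[OF n]) simp
  also have "\<dots> = local_prod beta_loc n"
    by (simp add: beta_loc_def[abs_def])
  finally show ?thesis using beta_divisor_form[OF n] by simp
qed

lemma beta_prime_power:
  assumes p: "prime p"
  shows "beta (p ^ a) = real p ^ a * beta_loc p a"
  using beta_local_prod[of "p ^ a"] local_prod_prime_power[OF p, of beta_loc a] p
  by (cases "a = 0") (auto simp: prime_gt_0_nat)

lemma beta_1 [simp]: "beta (Suc 0) = 1"
  using beta_prime_power[of 2 0] by simp

text \<open>Since the ratio -1/p has modulus at most 1/2, the local factors stay in [1/3, 3/2].\<close>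

lemma beta_loc_bounds:
  assumes p: "prime p"
  shows "1/3 \<le> beta_loc p a" "beta_loc p a \<le> 3/2"
proof -
  define q where "q = -1 / real p"
  have p2: "real p \<ge> 2" using prime_ge_2_nat[OF p] by simp
  then have q: "-1/2 \<le> q" "q < 0" unfolding q_def by (auto simp: field_simps)
  have "\<bar>q ^ Suc a\<bar> = \<bar>q\<bar> * \<bar>q\<bar> ^ a" by (simp add: power_abs abs_mult)
  also have "\<dots> \<le> \<bar>q\<bar>" using q by (intro mult_left_le power_le_one) auto
  finally have "\<bar>q ^ Suc a\<bar> \<le> \<bar>q\<bar>" .
  then have num: "1/2 \<le> 1 - q ^ Suc a" "1 - q ^ Suc a \<le> 3/2" using q by auto
  have "beta_loc p a = (1 - q ^ Suc a) / (1 - q)"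
    unfolding beta_loc_def q_def[symmetric] using q by (subst sum_gp0) auto
  moreover have "1 \<le> 1 - q" "1 - q \<le> 3/2" using q by auto
  ultimately show "1/3 \<le> beta_loc p a" "beta_loc p a \<le> 3/2"
    using num by (simp_all add: le_divide_eq divide_le_eq)
qed

text \<open>Write n/beta(n) = sum over d dividing n of g_beta(d): g_beta is multiplicative and its
  local factors are the successive differences of the local factors of n/beta(n).\<close>

definition inv_beta_loc :: "nat \<Rightarrow> nat \<Rightarrow> real" where
  "inv_beta_loc p a = 1 / beta_loc p a"

definition g_loc :: "nat \<Rightarrow> nat \<Rightarrow> real" where
  "g_loc p a = (if a = 0 then 1 else inv_beta_loc p a - inv_beta_loc p (a - 1))"

definition g_beta :: "nat \<Rightarrow> real" where
  "g_beta = local_prod g_loc"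

lemma sum_g_loc: "(\<Sum>a\<le>v. g_loc p a) = inv_beta_loc p v"
  by (induction v) (auto simp: g_loc_def inv_beta_loc_def)

lemma inv_beta_divisor_sum:
  assumes n: "n > 0"
  shows "1 / beta n = (\<Sum>d | d dvd n. g_beta d) / real n"
proof -
  have "(\<Sum>d | d dvd n. g_beta d) = local_prod (\<lambda>p v. \<Sum>a\<le>v. g_loc p a) n"
    unfolding g_beta_def by (rule divisor_sum_local_prod[OF n]) (simp add: g_loc_def)
  also have "\<dots> = 1 / local_prod beta_loc n"
    unfolding sum_g_loc local_prod_def inv_beta_loc_def by (simp add: prod_dividef)
  finally show ?thesis using beta_local_prod[OF n] by simp
qed

text \<open>Key local estimate: |g_beta(p^a)| <= 9 p^-a for a >= 1, because consecutive local
  factors of beta differ by p^-a and are bounded below by 1/3.\<close>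

lemma g_loc_bound:
  assumes p: "prime p" and a: "a \<ge> 1"
  shows "\<bar>g_loc p a\<bar> \<le> 9 * (1 / real p) ^ a"
proof -
  obtain b where b: "a = Suc b" using a by (cases a) auto
  have B: "1/3 \<le> beta_loc p a" "1/3 \<le> beta_loc p b" using beta_loc_bounds[OF p] by auto
  have step: "beta_loc p a = beta_loc p b + (-1 / real p) ^ a"
    unfolding b beta_loc_def by simp
  have "g_loc p a = - ((-1 / real p) ^ a) / (beta_loc p a * beta_loc p b)"
    using B step by (simp add: g_loc_def inv_beta_loc_def b field_simps)
  then have ga: "\<bar>g_loc p a\<bar> = (1 / real p) ^ a / (beta_loc p a * beta_loc p b)"
    using B by (simp add: power_abs abs_mult)
  have "(1/3) * (1/3) \<le> beta_loc p a * beta_loc p b"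
    using B by (intro mult_mono) auto
  then have "(1 / real p) ^ a / (beta_loc p a * beta_loc p b) \<le> (1 / real p) ^ a / (1/9)"
    by (intro divide_left_mono) auto
  then show ?thesis unfolding ga by simp
qed

definition weight_loc :: "real \<Rightarrow> nat \<Rightarrow> nat \<Rightarrow> real" where
  "weight_loc \<delta> p a = \<bar>g_loc p a\<bar> * (real p powr -\<delta>) ^ a"

lemma weight_loc_0 [simp]: "weight_loc \<delta> p 0 = 1"
  by (simp add: weight_loc_def g_loc_def)

lemma weight_loc_nonneg: "0 \<le> weight_loc \<delta> p a"
  by (simp add: weight_loc_def)

lemma abs_g_beta_powr:
  assumes d: "d > 0"
  shows "\<bar>g_beta d\<bar> * real d powr -\<delta> = local_prod (weight_loc \<delta>) d"
proof -
  have "real d powr -\<delta> = (\<Prod>p\<in>prime_factors d. (real p ^ multiplicity p d) powr -\<delta>)"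
    unfolding real_prime_factorization[OF d] by (rule prod_powr_distrib)
  also have "\<dots> = (\<Prod>p\<in>prime_factors d. (real p powr -\<delta>) ^ multiplicity p d)"
    by (intro prod.cong refl) (auto simp: powr_realpow [symmetric] powr_powr powr_power
        in_prime_factors_imp_prime prime_gt_0_nat mult.commute)
  finally show ?thesis
    unfolding g_beta_def local_prod_def weight_loc_def abs_prod by (simp add: prod.distrib)
qed

lemma prime_powr_facts:
  assumes p: "prime p" and \<delta>: "\<delta> > 0"
  shows "real p powr -(1+\<delta>) \<le> 1/2" "(1 / real p) * real p powr -\<delta> = real p powr -(1+\<delta>)"
proof -
  have p2: "real p \<ge> 2" using prime_ge_2_nat[OF p] by simp
  have inv: "real p powr -1 = 1 / real p" using p2 by (simp add: powr_minus_divide)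
  have "real p powr -(1+\<delta>) \<le> real p powr -1" using p2 \<delta> by (intro powr_mono) auto
  also have "\<dots> \<le> 1/2" unfolding inv using p2 by (simp add: field_simps)
  finally show "real p powr -(1+\<delta>) \<le> 1/2" .
  show "(1 / real p) * real p powr -\<delta> = real p powr -(1+\<delta>)"
  proof -
    have "-(1+\<delta>) = -\<delta> + -1" by simp
    then have "real p powr -(1+\<delta>) = real p powr (-\<delta>) * real p powr (-1)"
      by (simp only: powr_add)
    then show ?thesis unfolding inv by simp
  qed
qed

text \<open>Each local sum is at most 1 + 18 p^-(1+delta), hence at most exp(18 p^-(1+delta)).\<close>

lemma sum_weight_loc_le:
  assumes p: "prime p" and \<delta>: "\<delta> > 0"
  shows "(\<Sum>a\<le>A. weight_loc \<delta> p a) \<le> exp (18 * real p powr -(1+\<delta>))"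
proof -
  define r where "r = real p powr -(1+\<delta>)"
  have r: "0 \<le> r" "r \<le> 1/2" using prime_powr_facts[OF p \<delta>] unfolding r_def by auto
  have summand: "weight_loc \<delta> p a \<le> 9 * r ^ a" if "a \<ge> 1" for a
  proof -
    have "weight_loc \<delta> p a \<le> 9 * (1 / real p) ^ a * (real p powr -\<delta>) ^ a"
      unfolding weight_loc_def by (intro mult_right_mono g_loc_bound[OF p that]) simp
    also have "\<dots> = 9 * r ^ a"
      using prime_powr_facts(2)[OF p \<delta>] by (simp add: r_def power_mult_distrib[symmetric])
    finally show ?thesis .
  qed
  have geometric: "(\<Sum>a\<le>A. weight_loc \<delta> p a) \<le> 1 + 18 * r - 18 * r ^ Suc A"
  proof (induction A)
    case (Suc A)
    have "r * r ^ Suc A \<le> 1/2 * r ^ Suc A" using r by (intro mult_right_mono) auto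
    then show ?case using Suc.IH summand[of "Suc A"] by simp
  qed simp
  also have "\<dots> \<le> 1 + 18 * r" using r by simp
  also have "\<dots> \<le> exp (18 * r)" by (rule exp_ge_add_one_self)
  finally show ?thesis unfolding r_def .
qed

text \<open>Bounding partial sums by an Euler product over the primes below N gives a uniform bound
  by exp(18 zeta(1+delta)).\<close>

lemma partial_weighted_sum_bound:
  assumes \<delta>: "\<delta> > 0"
  shows "(\<Sum>d<N. \<bar>g_beta d\<bar> * real d powr -\<delta>) \<le> exp (18 * (\<Sum>n. real n powr -(1+\<delta>)))"
proof -
  define P where "P = {p. prime p \<and> p < N}"
  define D where "D = bounded_smooth P (\<lambda>_. N)"
  have finP: "finite P" unfolding P_def by (rule finite_subset[of _ "{..<N}"]) auto
  have Pprime: "\<And>p. p \<in> P \<Longrightarrow> prime p" unfolding P_def by auto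
  have "(\<Sum>d<N. \<bar>g_beta d\<bar> * real d powr -\<delta>) = (\<Sum>d\<in>{d\<in>{..<N}. d > 0}. \<bar>g_beta d\<bar> * real d powr -\<delta>)"
    by (rule sum.mono_neutral_right) auto
  also have "\<dots> \<le> (\<Sum>d\<in>D. \<bar>g_beta d\<bar> * real d powr -\<delta>)"
    unfolding D_def P_def
    by (rule sum_mono2[OF finite_bounded_smooth]) (auto intro: small_in_bounded_smooth)
  also have "\<dots> = (\<Sum>d\<in>D. local_prod (weight_loc \<delta>) d)"
    by (rule sum.cong) (auto simp: D_def bounded_smooth_def abs_g_beta_powr)
  also have "\<dots> = (\<Prod>p\<in>P. \<Sum>a\<le>N. weight_loc \<delta> p a)"
    unfolding D_def using sum_bounded_smooth[OF finP Pprime, of "weight_loc \<delta>" "\<lambda>_. N"] by simp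
  also have "\<dots> \<le> (\<Prod>p\<in>P. exp (18 * real p powr -(1+\<delta>)))"
    by (intro prod_mono conjI sum_nonneg sum_weight_loc_le[OF Pprime \<delta>])
       (auto intro: weight_loc_nonneg)
  also have "\<dots> = exp (18 * (\<Sum>p\<in>P. real p powr -(1+\<delta>)))"
    by (simp add: exp_sum finP sum_distrib_left)
  also have "\<dots> \<le> exp (18 * (\<Sum>n. real n powr -(1+\<delta>)))"
    using \<delta> by (simp add: sum_le_suminf finP summable_real_powr_iff)
  finally show ?thesis .
qed

lemma summable_weighted_g_beta:
  assumes "\<delta> > 0"
  shows "summable (\<lambda>d. \<bar>g_beta d\<bar> * real d powr -\<delta>)"
  by (rule summableI_nonneg_bounded[OF _ partial_weighted_sum_bound[OF assms]]) simp

text \<open>The Dirichlet coefficients G_beta(d) = g_beta(d)/d; their series is K1 (see below).\<close>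

definition G_loc :: "nat \<Rightarrow> nat \<Rightarrow> real" where
  "G_loc p a = g_loc p a * (1 / real p) ^ a"

definition G_beta :: "nat \<Rightarrow> real" where
  "G_beta d = g_beta d / real d"

lemma G_loc_0 [simp]: "G_loc p 0 = 1"
  by (simp add: G_loc_def g_loc_def)

lemma G_beta_0 [simp]: "G_beta 0 = 0"
  by (simp add: G_beta_def)

lemma G_beta_local_prod:
  assumes d: "d > 0"
  shows "G_beta d = local_prod G_loc d"
proof -
  have "local_prod G_loc d
      = (\<Prod>p\<in>prime_factors d. g_loc p (multiplicity p d) / real p ^ multiplicity p d)"
    unfolding local_prod_def G_loc_def by (simp add: power_one_over)
  also have "\<dots> = g_beta d / real d"
    unfolding real_prime_factorization[OF d] g_beta_def local_prod_def by (rule prod_dividef)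
  finally show ?thesis unfolding G_beta_def by simp
qed

lemma summable_abs_G_beta: "summable (\<lambda>d. \<bar>G_beta d\<bar>)"
proof (rule summable_comparison_test'[OF summable_weighted_g_beta[of 1]])
  fix d :: nat
  show "norm \<bar>G_beta d\<bar> \<le> \<bar>g_beta d\<bar> * real d powr -1"
    by (cases "d = 0") (simp_all add: G_beta_def powr_minus_divide abs_divide)
qed simp

lemma summable_G_beta: "summable G_beta"
  by (rule summable_rabs_cancel[OF summable_abs_G_beta])

lemma inv_beta_prime_power:
  assumes p: "prime p"
  shows "1 / beta (p ^ a) = inv_beta_loc p a * (1 / real p) ^ a"
  unfolding beta_prime_power[OF p] inv_beta_loc_def by (simp add: power_one_over)

lemma summation_by_parts_g_loc:
  "(\<Sum>a\<le>A. g_loc p a * x ^ a) = (1 - x) * (\<Sum>a<A. inv_beta_loc p a * x ^ a) + inv_beta_loc p A * x ^ A"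
proof (induction A)
  case (Suc A)
  have "(\<Sum>a\<le>Suc A. g_loc p a * x ^ a)
      = (\<Sum>a\<le>A. g_loc p a * x ^ a) + (inv_beta_loc p (Suc A) - inv_beta_loc p A) * x ^ Suc A"
    by (simp add: g_loc_def)
  then show ?case unfolding Suc.IH by (simp add: algebra_simps)
qed (simp add: g_loc_def inv_beta_loc_def)

lemma K1_factor_local_series:
  assumes p: "prime p"
  shows "summable (\<lambda>a. 1 / beta (p ^ a))"
    and "K1_factor p = (1 - 1 / real p) * (\<Sum>a. 1 / beta (p ^ a))"
proof -
  have p2: "real p \<ge> 2" using prime_ge_2_nat[OF p] by simp
  show sum: "summable (\<lambda>a. 1 / beta (p ^ a))"
  proof (rule summable_comparison_test')
    show "summable (\<lambda>a. 3 * (1 / real p) ^ a)" using p2 by (intro summable_mult summable_geometric) auto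
    fix a :: nat
    have "0 < inv_beta_loc p a" "inv_beta_loc p a \<le> 3"
      using beta_loc_bounds[OF p, of a] by (auto simp: inv_beta_loc_def field_simps)
    then show "norm (1 / beta (p ^ a)) \<le> 3 * (1 / real p) ^ a"
      unfolding inv_beta_prime_power[OF p] by (auto simp: abs_mult intro!: mult_right_mono)
  qed
  have "(\<Sum>a. 1 / beta (p ^ Suc a)) = (\<Sum>a. 1 / beta (p ^ a)) - 1"
    using suminf_split_head[OF sum] by simp
  then show "K1_factor p = (1 - 1 / real p) * (\<Sum>a. 1 / beta (p ^ a))"
    unfolding K1_factor_def by simp
qed

lemma K1_factor_partial_sums:
  assumes p: "prime p"
  shows "(\<lambda>A. \<Sum>a\<le>A. G_loc p a) \<longlonglongrightarrow> K1_factor p"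
proof -
  define u where "u = (\<lambda>a. 1 / beta (p ^ a))"
  note sum = K1_factor_local_series(1)[OF p, folded u_def]
  have "(\<Sum>a\<le>A. G_loc p a) = (1 - 1 / real p) * (\<Sum>a<A. u a) + u A" for A
    unfolding G_loc_def u_def inv_beta_prime_power[OF p] by (rule summation_by_parts_g_loc)
  moreover have "(\<lambda>A. (1 - 1 / real p) * (\<Sum>a<A. u a) + u A) \<longlonglongrightarrow> (1 - 1 / real p) * suminf u + 0"
    by (intro tendsto_intros summable_LIMSEQ sum summable_LIMSEQ_zero)
  ultimately show ?thesis using K1_factor_local_series(2)[OF p] by (simp add: u_def)
qed

text \<open>Each Euler factor is at least 1 (already the first two terms of the local series give 1),
  so the Euler product does not converge to 0.\<close>

lemma K1_factor_ge_1:
  assumes p: "prime p"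
  shows "1 \<le> K1_factor p"
proof -
  define x where "x = 1 / real p"
  have x: "0 < x" "x \<le> 1/2" unfolding x_def using prime_ge_2_nat[OF p] by (auto simp: field_simps)
  have nonneg: "0 \<le> beta (p ^ a)" for a
    using beta_loc_bounds[OF p, of a] by (simp add: beta_prime_power[OF p])
  have "1 / beta (p ^ 1) = x / (1 - x)"
    unfolding beta_prime_power[OF p] x_def by (simp add: beta_loc_def field_simps)
  moreover have "(\<Sum>a\<in>{0,1}. 1 / beta (p ^ a)) \<le> (\<Sum>a. 1 / beta (p ^ a))"
    by (rule sum_le_suminf[OF K1_factor_local_series(1)[OF p]]) (auto intro: nonneg)
  ultimately have "1 + x / (1 - x) \<le> (\<Sum>a. 1 / beta (p ^ a))" by simp
  then have "(1 - x) * (1 + x / (1 - x)) \<le> (1 - x) * (\<Sum>a. 1 / beta (p ^ a))"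
    using x by (intro mult_left_mono) auto
  then show ?thesis using x unfolding K1_factor_local_series(2)[OF p] x_def[symmetric]
    by (simp add: field_simps)
qed

lemma sum_le_suminf_tail:
  fixes f :: "nat \<Rightarrow> real"
  assumes "summable f" "\<And>n. 0 \<le> f n" "finite E" "\<And>d. d \<in> E \<Longrightarrow> m \<le> d"
  shows "(\<Sum>d\<in>E. f d) \<le> (\<Sum>k. f (k + m))"
proof -
  have inj: "inj_on (\<lambda>d. d - m) E"
    using assms(4) by (intro inj_onI) (metis le_add_diff_inverse2)
  have "(\<Sum>d\<in>E. f d) = (\<Sum>d\<in>E. f ((d - m) + m))"
    by (rule sum.cong) (use assms(4) in auto)
  also have "\<dots> = (\<Sum>k\<in>(\<lambda>d. d - m) ` E. f (k + m))"
    by (rule sum.reindex[OF inj, symmetric, unfolded comp_def])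
  also have "\<dots> \<le> (\<Sum>k. f (k + m))"
    by (rule sum_le_suminf) (use assms summable_ignore_initial_segment in auto)
  finally show ?thesis .
qed

lemma euler_partial_product_approx:
  "\<bar>(\<Prod>p\<le>N. if prime p then K1_factor p else 1) - (\<Sum>d\<le>N. G_beta d)\<bar>
     \<le> (\<Sum>k. \<bar>G_beta (k + Suc N)\<bar>)"
proof -
  define P where "P = {p. prime p \<and> p < Suc N}"
  define S where "S = {d\<in>{..N}. d > 0}"
  have finP: "finite P" unfolding P_def by (rule finite_subset[of _ "{..<Suc N}"]) auto
  have Pprime: "\<And>p. p \<in> P \<Longrightarrow> prime p" unfolding P_def by auto
  have product: "(\<Prod>p\<le>N. if prime p then K1_factor p else 1) = (\<Prod>p\<in>P. K1_factor p)"
    unfolding P_def by (subst prod.inter_filter[symmetric]) (auto intro: prod.cong)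
  have partial: "(\<Sum>d\<le>N. G_beta d) = (\<Sum>d\<in>S. G_beta d)"
    unfolding S_def by (rule sum.mono_neutral_right) (auto, metis G_beta_0 neq0_conv)
  have approx: "\<bar>(\<Prod>p\<in>P. \<Sum>a\<le>A. G_loc p a) - (\<Sum>d\<in>S. G_beta d)\<bar> \<le> (\<Sum>k. \<bar>G_beta (k + Suc N)\<bar>)"
    if A: "A \<ge> Suc N" for A
  proof -
    define D where "D = bounded_smooth P (\<lambda>_. A)"
    have finD: "finite D" unfolding D_def by (rule finite_bounded_smooth[OF finP Pprime])
    have sub: "S \<subseteq> D"
      unfolding S_def D_def P_def using small_in_bounded_smooth[of _ "Suc N" A] A by auto
    have "(\<Prod>p\<in>P. \<Sum>a\<le>A. G_loc p a) = (\<Sum>d\<in>D. local_prod G_loc d)"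
      unfolding D_def using sum_bounded_smooth[OF finP Pprime, of G_loc "\<lambda>_. A"] by simp
    also have "\<dots> = (\<Sum>d\<in>D. G_beta d)"
      by (rule sum.cong) (auto simp: D_def bounded_smooth_def G_beta_local_prod)
    finally have "(\<Prod>p\<in>P. \<Sum>a\<le>A. G_loc p a) - (\<Sum>d\<in>S. G_beta d) = (\<Sum>d\<in>D - S. G_beta d)"
      by (simp add: sum_diff[OF finD sub])
    also have "\<bar>\<dots>\<bar> \<le> (\<Sum>d\<in>D - S. \<bar>G_beta d\<bar>)" by (rule sum_abs)
    also have "\<dots> \<le> (\<Sum>k. \<bar>G_beta (k + Suc N)\<bar>)"
      by (rule sum_le_suminf_tail[OF summable_abs_G_beta])
         (use finD in \<open>auto simp: D_def S_def bounded_smooth_def\<close>)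
    finally show ?thesis .
  qed
  have "(\<lambda>A. \<bar>(\<Prod>p\<in>P. \<Sum>a\<le>A. G_loc p a) - (\<Sum>d\<in>S. G_beta d)\<bar>)
          \<longlonglongrightarrow> \<bar>(\<Prod>p\<in>P. K1_factor p) - (\<Sum>d\<in>S. G_beta d)\<bar>"
    by (intro tendsto_intros K1_factor_partial_sums Pprime)
  then have "\<bar>(\<Prod>p\<in>P. K1_factor p) - (\<Sum>d\<in>S. G_beta d)\<bar> \<le> (\<Sum>k. \<bar>G_beta (k + Suc N)\<bar>)"
    by (rule LIMSEQ_le_const2) (use approx in auto)
  then show ?thesis unfolding product partial .
qed

lemma euler_product_K1:
  "(\<lambda>p::nat. if prime p then K1_factor p else 1) has_prod (\<Sum>d. G_beta d)"
proof -
  define PP where "PP = (\<lambda>N. \<Prod>p\<le>N. if prime p then K1_factor p else 1)"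
  have "(\<lambda>N. \<Sum>d<Suc N. \<bar>G_beta d\<bar>) \<longlonglongrightarrow> (\<Sum>d. \<bar>G_beta d\<bar>)"
    by (rule LIMSEQ_Suc[OF summable_LIMSEQ[OF summable_abs_G_beta]])
  then have "(\<lambda>N. (\<Sum>d. \<bar>G_beta d\<bar>) - (\<Sum>d<Suc N. \<bar>G_beta d\<bar>)) \<longlonglongrightarrow> 0"
    by (intro tendsto_eq_intros) auto
  moreover have "(\<Sum>k. \<bar>G_beta (k + Suc N)\<bar>) = (\<Sum>d. \<bar>G_beta d\<bar>) - (\<Sum>d<Suc N. \<bar>G_beta d\<bar>)" for N
    using suminf_split_initial_segment[OF summable_abs_G_beta, of "Suc N"] by simp
  ultimately have tail: "(\<lambda>N. \<Sum>k. \<bar>G_beta (k + Suc N)\<bar>) \<longlonglongrightarrow> 0"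
    by presburger
  have "(\<lambda>N. PP N - (\<Sum>d\<le>N. G_beta d)) \<longlonglongrightarrow> 0"
    by (rule Lim_null_comparison[OF always_eventually tail])
       (use euler_partial_product_approx in \<open>auto simp: PP_def\<close>)
  moreover have "(\<lambda>N. \<Sum>d\<le>N. G_beta d) \<longlonglongrightarrow> (\<Sum>d. G_beta d)"
    using LIMSEQ_Suc[OF summable_LIMSEQ[OF summable_G_beta]] by (simp add: lessThan_Suc_atMost)
  ultimately have lim: "PP \<longlonglongrightarrow> (\<Sum>d. G_beta d)"
    using tendsto_add by fastforce
  have "1 \<le> PP N" for N
    unfolding PP_def by (rule prod_ge_1) (auto intro: K1_factor_ge_1)
  then have "1 \<le> (\<Sum>d. G_beta d)"
    by (intro LIMSEQ_le_const[OF lim]) auto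
  with lim show ?thesis
    unfolding has_prod_def raw_has_prod_def PP_def add_0_right by auto
qed

lemma sum_divisor_sums_swap:
  fixes h :: "nat \<Rightarrow> nat \<Rightarrow> 'a::comm_monoid_add"
  shows "(\<Sum>n\<in>{1..N}. \<Sum>d | d dvd n. h d n) = (\<Sum>d\<in>{1..N}. \<Sum>k\<in>{1..N div d}. h d (d * k))"
proof -
  have "(\<Sum>n\<in>{1..N}. \<Sum>d | d dvd n. h d n) = (\<Sum>(n, d)\<in>(SIGMA n:{1..N}. {d. d dvd n}). h d n)"
    by (rule sum.Sigma) auto
  also have "\<dots> = (\<Sum>(d, k)\<in>(SIGMA d:{1..N}. {1..N div d}). h d (d * k))"
  proof (rule sum.reindex_bij_witness[where j = "\<lambda>(n, d). (d, n div d)" and i = "\<lambda>(d, k). (d * k, d)"])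
    fix a assume "a \<in> (SIGMA n:{1..N}. {d. d dvd n})"
    then obtain d k where a: "a = (d * k, d)" "1 \<le> d * k" "d * k \<le> N"
      by (auto elim!: dvdE)
    then have "0 < d" "0 < k" by auto
    moreover have "k \<le> N div d" using a \<open>0 < d\<close> by (metis div_le_mono nonzero_mult_div_cancel_left not_gr0)
    moreover have "d \<le> N"
      using a(3) \<open>0 < k\<close> by (cases k) auto
    ultimately show "(\<lambda>(n, d). (d, n div d)) a \<in> (SIGMA d:{1..N}. {1..N div d})"
      "(\<lambda>(d, k). (d * k, d)) ((\<lambda>(n, d). (d, n div d)) a) = a"
      "(\<lambda>(d, k). h d (d * k)) ((\<lambda>(n, d). (d, n div d)) a) = (\<lambda>(n, d). h d n) a"
      using a by auto
  next
    fix b assume "b \<in> (SIGMA d:{1..N}. {1..N div d})"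
    then obtain d k where b: "b = (d, k)" "1 \<le> d" "1 \<le> k" "k \<le> N div d" by auto
    have "d * k \<le> d * (N div d)" using b(4) by (rule mult_le_mono2)
    also have "\<dots> \<le> N" by (rule times_div_less_eq_dividend)
    finally show "(\<lambda>(d, k). (d * k, d)) b \<in> (SIGMA n:{1..N}. {d. d dvd n})"
      "(\<lambda>(n, d). (d, n div d)) ((\<lambda>(d, k). (d * k, d)) b) = b"
      using b by auto
  qed
  also have "\<dots> = (\<Sum>d\<in>{1..N}. \<Sum>k\<in>{1..N div d}. h d (d * k))"
    by (rule sum.Sigma[symmetric]) auto
  finally show ?thesis .
qed

lemma sum_inv_beta_hyperbola:
  "(\<Sum>n\<in>{1..N}. 1 / beta n) = (\<Sum>d\<in>{1..N}. G_beta d * harm (N div d))"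
proof -
  have "(\<Sum>n\<in>{1..N}. 1 / beta n) = (\<Sum>n\<in>{1..N}. \<Sum>d | d dvd n. g_beta d / real n)"
    by (rule sum.cong[OF refl]) (simp add: inv_beta_divisor_sum sum_divide_distrib)
  also have "\<dots> = (\<Sum>d\<in>{1..N}. \<Sum>k\<in>{1..N div d}. g_beta d / real (d * k))"
    by (rule sum_divisor_sums_swap)
  also have "\<dots> = (\<Sum>d\<in>{1..N}. G_beta d * harm (N div d))"
    unfolding G_beta_def harm_def
    by (rule sum.cong[OF refl]) (simp add: sum_distrib_left divide_inverse mult.assoc)
  finally show ?thesis .
qed

lemma ln_Suc_bounds:
  assumes m: "m \<ge> 1"
  shows "ln (real m) \<le> ln (real (Suc m))" "ln (real (Suc m)) \<le> ln (real m) + 1 / real m"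
proof -
  have m1: "real m \<ge> 1" using m by simp
  show "ln (real m) \<le> ln (real (Suc m))" using m1 by simp
  have "real (Suc m) = real m * (1 + 1 / real m)"
    using m1 by (simp add: field_simps)
  then have "ln (real (Suc m)) = ln (real m * (1 + 1 / real m))"
    by (simp only:)
  also have "\<dots> = ln (real m) + ln (1 + 1 / real m)"
    using m1 by (intro ln_mult_pos) (auto simp: add_pos_pos)
  also have "ln (1 + 1 / real m) \<le> 1 / real m"
    by (rule ln_add_one_self_le_self) simp
  finally show "ln (real (Suc m)) \<le> ln (real m) + 1 / real m" by simp
qed

lemma harm_asymptotic:
  assumes m: "m \<ge> 1"
  shows "\<bar>harm m - ln (real m) - euler_mascheroni\<bar> \<le> 1 / real m"
proof -
  have "harm m - ln (real (Suc m)) + inverse (real (2 * (m + 1))) \<le> euler_mascheroni"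
       "euler_mascheroni \<le> harm m - ln (real (Suc m)) + inverse (real (2 * m))"
    using euler_mascheroni_bounds[OF m] by auto
  moreover have "0 \<le> inverse (real (2 * (m + 1)))" "inverse (real (2 * m)) \<le> 1 / real m"
    using m by (auto simp: field_simps)
  ultimately show ?thesis using ln_Suc_bounds[OF m] by (intro abs_leI) linarith+
qed

lemma floor_div_bounds:
  fixes x :: real
  assumes d: "d \<in> {1..nat \<lfloor>x\<rfloor>}"
  defines "m \<equiv> nat \<lfloor>x\<rfloor> div d"
  shows "m \<ge> 1" "real m \<le> x / real d" "x / real d < real m + 1"
proof -
  define N where "N = nat \<lfloor>x\<rfloor>"
  have d1: "1 \<le> d" "d \<le> N" using d unfolding N_def by auto
  then have N: "real N \<le> x" "x < real N + 1" unfolding N_def by linarith+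
  have m: "m = N div d" unfolding m_def N_def ..
  have "0 < N div d" using d1 by (simp add: div_greater_zero_iff)
  then show "m \<ge> 1" unfolding m by simp
  have "real (d * m) \<le> real N" unfolding m by (rule of_nat_mono[OF times_div_less_eq_dividend])
  then show "real m \<le> x / real d" using d1 N by (simp add: field_simps)
  have "N < d * m + d" unfolding m using d1 mult_div_mod_eq[of d N] mod_less_divisor[of d N] by linarith
  then have "real (N + 1) \<le> real (d * m + d)" by (intro of_nat_mono) simp
  then have "real N + 1 \<le> real d * real m + real d" by simp
  then show "x / real d < real m + 1" using d1 N by (simp add: field_simps)
qed

lemma harm_floor_div_asymptotic:
  fixes x :: real
  assumes x: "x \<ge> 1" and d: "d \<in> {1..nat \<lfloor>x\<rfloor>}"
  shows "\<bar>harm (nat \<lfloor>x\<rfloor> div d) - ln (x / real d) - euler_mascheroni\<bar> \<le> 4 * real d / x"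
proof -
  define m where "m = nat \<lfloor>x\<rfloor> div d"
  note m = floor_div_bounds[OF d, folded m_def]
  have d1: "real d \<ge> 1" using d by auto
  have harm: "\<bar>harm m - ln (real m) - euler_mascheroni\<bar> \<le> 1 / real m"
    by (rule harm_asymptotic[OF m(1)])
  have "ln (real m) \<le> ln (x / real d)" using m by simp
  moreover have "ln (x / real d) \<le> ln (real (Suc m))" using m x d1 by simp
  moreover have "1 / real m \<le> 2 * real d / x"
  proof -
    have "real d \<le> real d * real m" using m(1) d1 by simp
    moreover have "x < real d * (real m + 1)" using m(3) d1 by (simp add: field_simps)
    ultimately have "x \<le> 2 * real d * real m" by (simp add: algebra_simps)
    then show ?thesis using m(1) x by (simp add: field_simps)
  qed
  ultimately show ?thesis
    using harm ln_Suc_bounds[OF m(1)] unfolding m_def[symmetric] by (auto simp: abs_le_iff)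
qed

definition rankin_sum :: "real \<Rightarrow> real" where
  "rankin_sum \<delta> = (\<Sum>d. \<bar>g_beta d\<bar> * real d powr -\<delta>)"

lemma rankin_sum_nonneg: "\<delta> > 0 \<Longrightarrow> 0 \<le> rankin_sum \<delta>"
  unfolding rankin_sum_def by (rule suminf_nonneg[OF summable_weighted_g_beta]) auto

text \<open>Rankin's trick: the sum of |g_beta(d)| for d <= x is O(x^delta).\<close>

lemma rankin_partial_sum_bound:
  fixes x \<delta> :: real
  assumes x: "x \<ge> 1" and \<delta>: "\<delta> > 0"
  shows "(\<Sum>d\<in>{1..nat \<lfloor>x\<rfloor>}. \<bar>g_beta d\<bar>) \<le> x powr \<delta> * rankin_sum \<delta>"
proof -
  have "\<bar>g_beta d\<bar> \<le> x powr \<delta> * (\<bar>g_beta d\<bar> * real d powr -\<delta>)" if d: "d \<in> {1..nat \<lfloor>x\<rfloor>}" for d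
  proof -
    have d1: "real d \<ge> 1" using d by simp
    have "real d \<le> real (nat \<lfloor>x\<rfloor>)" using d by simp
    also have "\<dots> \<le> x" using x by linarith
    finally have "real d \<le> x" .
    then have "real d powr \<delta> \<le> x powr \<delta>" using \<delta> by (intro powr_mono2) auto
    then have "1 \<le> x powr \<delta> * real d powr -\<delta>"
      using d1 by (simp add: powr_minus_divide)
    then have "\<bar>g_beta d\<bar> * 1 \<le> \<bar>g_beta d\<bar> * (x powr \<delta> * real d powr -\<delta>)"
      by (intro mult_left_mono) auto
    then show ?thesis by (simp add: mult_ac)
  qed
  then have "(\<Sum>d\<in>{1..nat \<lfloor>x\<rfloor>}. \<bar>g_beta d\<bar>)
      \<le> x powr \<delta> * (\<Sum>d\<in>{1..nat \<lfloor>x\<rfloor>}. \<bar>g_beta d\<bar> * real d powr -\<delta>)"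
    unfolding sum_distrib_left by (rule sum_mono)
  also have "\<dots> \<le> x powr \<delta> * rankin_sum \<delta>"
    unfolding rankin_sum_def
    by (intro mult_left_mono sum_le_suminf[OF summable_weighted_g_beta[OF \<delta>]]) auto
  finally show ?thesis .
qed

lemma ln_le_powr_div:
  fixes x \<delta> :: real
  assumes "x \<ge> 1" "\<delta> > 0"
  shows "ln x \<le> x powr \<delta> / \<delta>"
proof -
  have "ln (x powr \<delta>) \<le> x powr \<delta> - 1" using assms by (intro ln_le_minus_one) simp
  then show ?thesis using assms by (simp add: field_simps)
qed

text \<open>Logarithmic factors are absorbed by a power: |G_beta(d)| (1 + ln d) is bounded by a
  multiple of the summable weight |g_beta(d)| d^-delta times d^(2 delta - 1).\<close>

lemma abs_G_beta_log_bound: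
  assumes d: "d \<ge> 1" and \<delta>: "\<delta> > 0"
  shows "\<bar>G_beta d\<bar> * (1 + ln (real d))
           \<le> (1 + 1 / \<delta>) * (\<bar>g_beta d\<bar> * real d powr -\<delta>) * real d powr (2 * \<delta> - 1)"
proof -
  define r where "r = real d"
  have r1: "r \<ge> 1" unfolding r_def using d by simp
  have "1 + ln r \<le> (1 + 1 / \<delta>) * r powr \<delta>"
    using ln_le_powr_div[OF r1 \<delta>] ge_one_powr_ge_zero[OF r1, of \<delta>] \<delta>
    by (simp add: algebra_simps)
  have split: "r powr -\<delta> * r powr (2 * \<delta> - 1) = r powr \<delta> / r"
    using r1 by (simp add: powr_add[symmetric] powr_diff)
  have "\<bar>G_beta d\<bar> * (1 + ln r) = \<bar>g_beta d\<bar> / r * (1 + ln r)"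
    using r1 unfolding G_beta_def r_def by (simp add: abs_divide)
  also have "\<dots> \<le> \<bar>g_beta d\<bar> / r * ((1 + 1 / \<delta>) * r powr \<delta>)"
    using r1 \<open>1 + ln r \<le> _\<close> by (intro mult_left_mono) auto
  also have "\<dots> = (1 + 1 / \<delta>) * \<bar>g_beta d\<bar> * (r powr -\<delta> * r powr (2 * \<delta> - 1))"
    unfolding split by simp
  finally show ?thesis unfolding r_def by (simp add: mult_ac)
qed

lemma summable_G_beta_log: "summable (\<lambda>d. \<bar>G_beta d\<bar> * (1 + ln (real d)))"
proof (rule summable_comparison_test'[where N = 1])
  show "summable (\<lambda>d. 5 * (\<bar>g_beta d\<bar> * real d powr -(1/4)))"
    by (intro summable_mult summable_weighted_g_beta) simp
  fix d :: nat assume d: "d \<ge> 1"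
  have "real d powr (2 * (1/4) - 1) \<le> real d powr 0" using d by (intro powr_mono) auto
  then have "real d powr (2 * (1/4) - 1) \<le> 1" using d by simp
  then have "5 * (\<bar>g_beta d\<bar> * real d powr -(1/4)) * real d powr (2 * (1/4) - 1)
      \<le> 5 * (\<bar>g_beta d\<bar> * real d powr -(1/4)) * 1"
    by (intro mult_left_mono) auto
  then have "\<bar>G_beta d\<bar> * (1 + ln (real d)) \<le> 5 * (\<bar>g_beta d\<bar> * real d powr -(1/4))"
    using abs_G_beta_log_bound[OF d, of "1/4"] by simp
  moreover have "0 \<le> ln (real d)" using d by simp
  ultimately show "norm (\<bar>G_beta d\<bar> * (1 + ln (real d))) \<le> 5 * (\<bar>g_beta d\<bar> * real d powr -(1/4))"
    by simp
qed

text \<open>For 1 <= x <= d, the factor ln x + gamma - ln d is bounded by 1 + ln d, since 0 <= gamma <= 1.\<close>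

lemma gamma_log_bound:
  assumes "1 \<le> x" "x \<le> real d"
  shows "\<bar>ln x + euler_mascheroni - ln (real d)\<bar> \<le> 1 + ln (real d)"
proof -
  have "0 \<le> ln x" "ln x \<le> ln (real d)" using assms by auto
  moreover have "0 \<le> (euler_mascheroni :: real)" "(euler_mascheroni :: real) \<le> 1"
    using euler_mascheroni_pos euler_mascheroni_less_13_over_22 by auto
  ultimately show ?thesis by (simp add: abs_le_iff)
qed

lemma summable_G_beta_gamma_log: "summable (\<lambda>d. G_beta d * (euler_mascheroni - ln (real d)))"
proof (rule summable_comparison_test'[OF summable_G_beta_log, where N = 1])
  fix d :: nat assume "d \<ge> 1"
  then have "\<bar>ln 1 + euler_mascheroni - ln (real d)\<bar> \<le> 1 + ln (real d)"
    by (intro gamma_log_bound) auto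
  then show "norm (G_beta d * (euler_mascheroni - ln (real d))) \<le> \<bar>G_beta d\<bar> * (1 + ln (real d))"
    by (auto simp: abs_mult intro: mult_left_mono)
qed

text \<open>The tails of the series for K1 and K2 beyond x contribute O(x^(2 delta - 1)).\<close>

lemma tail_error_bound:
  fixes x \<delta> :: real
  assumes x: "x \<ge> 1" and \<delta>: "0 < \<delta>" "\<delta> \<le> 1/2"
  defines "N \<equiv> nat \<lfloor>x\<rfloor>"
  shows "\<bar>\<Sum>k. G_beta (k + Suc N) * (ln x + euler_mascheroni - ln (real (k + Suc N)))\<bar>
           \<le> (1 + 1 / \<delta>) * rankin_sum \<delta> * x powr (2 * \<delta> - 1)"
proof -
  define w where "w = (\<lambda>d. \<bar>g_beta d\<bar> * real d powr -\<delta>)"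
  define c where "c = (1 + 1 / \<delta>) * x powr (2 * \<delta> - 1)"
  have w: "summable w" "\<And>d. 0 \<le> w d" unfolding w_def using summable_weighted_g_beta[OF \<delta>(1)] by auto
  have pointwise: "\<bar>G_beta d * (ln x + euler_mascheroni - ln (real d))\<bar> \<le> c * w d" if d: "d > N" for d
  proof -
    have "x < real d" using d x unfolding N_def by linarith
    then have "\<bar>G_beta d * (ln x + euler_mascheroni - ln (real d))\<bar> \<le> \<bar>G_beta d\<bar> * (1 + ln (real d))"
      using gamma_log_bound[OF x] by (simp add: abs_mult mult_left_mono)
    also have "\<dots> \<le> (1 + 1 / \<delta>) * w d * real d powr (2 * \<delta> - 1)"
      unfolding w_def using d \<delta> by (intro abs_G_beta_log_bound) auto
    also have "\<dots> \<le> (1 + 1 / \<delta>) * w d * x powr (2 * \<delta> - 1)"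
      using \<open>x < real d\<close> x \<delta> w(2)[of d] by (intro mult_left_mono powr_mono2') auto
    finally show ?thesis by (simp add: c_def mult_ac)
  qed
  have "\<bar>\<Sum>k. G_beta (k + Suc N) * (ln x + euler_mascheroni - ln (real (k + Suc N)))\<bar>
      \<le> (\<Sum>k. c * w (k + Suc N))"
    using summable_mult[OF summable_ignore_initial_segment[OF w(1), of "Suc N"], of c]
    by (rule norm_suminf_le[where 'a = real, rotated, unfolded real_norm_def])
       (rule pointwise, simp)
  also have "\<dots> = c * (\<Sum>k. w (k + Suc N))"
    by (rule suminf_mult[OF summable_ignore_initial_segment[OF w(1)]])
  also have "(\<Sum>k. w (k + Suc N)) \<le> rankin_sum \<delta>"
    using suminf_split_initial_segment[OF w(1), of "Suc N"] sum_nonneg[of "{..<Suc N}" w] w(2)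
    unfolding rankin_sum_def w_def[symmetric] by simp
  then have "c * (\<Sum>k. w (k + Suc N)) \<le> c * rankin_sum \<delta>"
    unfolding c_def using \<delta> by (intro mult_left_mono) auto
  finally show ?thesis by (simp add: c_def mult_ac)
qed

lemma hyperbola_error_bound:
  fixes x \<delta> :: real
  assumes x: "x \<ge> 1" and \<delta>: "0 < \<delta>"
  defines "N \<equiv> nat \<lfloor>x\<rfloor>"
  shows "\<bar>\<Sum>d\<in>{1..N}. G_beta d * (harm (N div d) - ln (x / real d) - euler_mascheroni)\<bar>
           \<le> 4 * rankin_sum \<delta> * x powr (\<delta> - 1)"
proof -
  have "\<bar>\<Sum>d\<in>{1..N}. G_beta d * (harm (N div d) - ln (x / real d) - euler_mascheroni)\<bar>
      \<le> (\<Sum>d\<in>{1..N}. 4 / x * \<bar>g_beta d\<bar>)"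
  proof (rule order.trans[OF sum_abs sum_mono])
    fix d assume d: "d \<in> {1..N}"
    have "\<bar>G_beta d * (harm (N div d) - ln (x / real d) - euler_mascheroni)\<bar> \<le> \<bar>G_beta d\<bar> * (4 * real d / x)"
      unfolding abs_mult N_def using d x
      by (intro mult_left_mono harm_floor_div_asymptotic) (auto simp: N_def)
    also have "\<dots> = 4 / x * \<bar>g_beta d\<bar>"
      using d by (simp add: G_beta_def abs_divide)
    finally show "\<bar>G_beta d * (harm (N div d) - ln (x / real d) - euler_mascheroni)\<bar> \<le> 4 / x * \<bar>g_beta d\<bar>" .
  qed
  also have "\<dots> \<le> 4 / x * (x powr \<delta> * rankin_sum \<delta>)"
    unfolding sum_distrib_left[symmetric] N_def using x
    by (intro mult_left_mono rankin_partial_sum_bound[OF x \<delta>]) auto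
  also have "\<dots> = 4 * rankin_sum \<delta> * x powr (\<delta> - 1)"
    using x by (simp add: powr_diff)
  finally show ?thesis .
qed

lemma suminf_split_at:
  fixes f :: "nat \<Rightarrow> real"
  assumes "summable f" "f 0 = 0"
  shows "suminf f = (\<Sum>d\<in>{1..N}. f d) + (\<Sum>k. f (k + Suc N))"
proof -
  have "(\<Sum>d<Suc N. f d) = (\<Sum>d\<in>{1..N}. f d)"
    using assms(2) by (simp add: lessThan_Suc_atMost atMost_atLeast0 sum.atLeast_Suc_atMost)
  then show ?thesis using suminf_split_initial_segment[OF assms(1), of "Suc N"] by simp
qed

lemma error_decomposition:
  fixes x :: real
  assumes x: "x \<ge> 1"
  defines "N \<equiv> nat \<lfloor>x\<rfloor>"
  shows "(\<Sum>n\<in>{1..N}. 1 / beta n) - (\<Sum>d. G_beta d) * ln x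
           - (\<Sum>d. G_beta d * (euler_mascheroni - ln (real d)))
         = (\<Sum>d\<in>{1..N}. G_beta d * (harm (N div d) - ln (x / real d) - euler_mascheroni))
           - (\<Sum>k. G_beta (k + Suc N) * (ln x + euler_mascheroni - ln (real (k + Suc N))))"
proof -
  let ?\<gamma> = "euler_mascheroni :: real"
  define T1 where "T1 = (\<Sum>k. G_beta (k + Suc N))"
  define T2 where "T2 = (\<Sum>k. G_beta (k + Suc N) * (?\<gamma> - ln (real (k + Suc N))))"
  have s1: "summable (\<lambda>k. G_beta (k + Suc N))"
    by (rule summable_ignore_initial_segment[OF summable_G_beta])
  have s2: "summable (\<lambda>k. G_beta (k + Suc N) * (?\<gamma> - ln (real (k + Suc N))))"
    by (rule summable_ignore_initial_segment[OF summable_G_beta_gamma_log])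
  have K1: "(\<Sum>d. G_beta d) = (\<Sum>d\<in>{1..N}. G_beta d) + T1"
    unfolding T1_def by (rule suminf_split_at[OF summable_G_beta]) simp
  have K2: "(\<Sum>d. G_beta d * (?\<gamma> - ln (real d))) = (\<Sum>d\<in>{1..N}. G_beta d * (?\<gamma> - ln (real d))) + T2"
    unfolding T2_def by (rule suminf_split_at[OF summable_G_beta_gamma_log]) simp
  have tail: "(\<Sum>k. G_beta (k + Suc N) * (ln x + ?\<gamma> - ln (real (k + Suc N)))) = T1 * ln x + T2"
    unfolding T1_def T2_def
    by (subst suminf_mult2[OF s1], subst suminf_add[OF summable_mult2[OF s1] s2]) (simp add: algebra_simps)
  have "(\<Sum>n\<in>{1..N}. 1 / beta n) = (\<Sum>d\<in>{1..N}. G_beta d * harm (N div d))"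
    by (rule sum_inv_beta_hyperbola)
  also have "\<dots> = (\<Sum>d\<in>{1..N}. G_beta d * (harm (N div d) - ln (x / real d) - ?\<gamma>)
                     + ln x * G_beta d + G_beta d * (?\<gamma> - ln (real d)))"
  proof (intro sum.cong refl)
    fix d assume "d \<in> {1..N}"
    then have "ln (x / real d) = ln x - ln (real d)" using x by (intro ln_divide_pos) auto
    then show "G_beta d * harm (N div d) = G_beta d * (harm (N div d) - ln (x / real d) - ?\<gamma>)
                     + ln x * G_beta d + G_beta d * (?\<gamma> - ln (real d))"
      by (simp only:) (simp add: algebra_simps)
  qed
  also have "\<dots> = (\<Sum>d\<in>{1..N}. G_beta d * (harm (N div d) - ln (x / real d) - ?\<gamma>))
                  + ln x * (\<Sum>d\<in>{1..N}. G_beta d) + (\<Sum>d\<in>{1..N}. G_beta d * (?\<gamma> - ln (real d)))"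
    by (simp add: sum.distrib sum_distrib_left)
  finally show ?thesis
    unfolding K1 K2 tail by (simp add: algebra_simps)
qed

lemma error_bound:
  fixes x \<delta> :: real
  assumes x: "x \<ge> 1" and \<delta>: "0 < \<delta>" "\<delta> \<le> 1/2"
  shows "\<bar>(\<Sum>n\<in>{1..nat \<lfloor>x\<rfloor>}. 1 / beta n) - (\<Sum>d. G_beta d) * ln x
            - (\<Sum>d. G_beta d * (euler_mascheroni - ln (real d)))\<bar>
         \<le> (5 + 1 / \<delta>) * rankin_sum \<delta> * x powr (2 * \<delta> - 1)"
proof -
  have "x powr (\<delta> - 1) \<le> x powr (2 * \<delta> - 1)" using x \<delta> by (intro powr_mono) auto
  then have "4 * rankin_sum \<delta> * x powr (\<delta> - 1) \<le> 4 * rankin_sum \<delta> * x powr (2 * \<delta> - 1)"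
    using rankin_sum_nonneg[OF \<delta>(1)] by (intro mult_left_mono) auto
  then show ?thesis
    unfolding error_decomposition[OF x]
    using hyperbola_error_bound[OF x \<delta>(1)] tail_error_bound[OF x \<delta>]
    by (simp add: algebra_simps abs_diff_le_iff abs_le_iff)
qed

theorem mainTheorem5:
  shows "\<exists>K1 K2 :: real.
    ((\<lambda>p::nat. if prime p then K1_factor p else 1) has_prod K1) \<and>
    (\<forall>\<epsilon>>0. (\<lambda>x::real. (\<Sum>n\<in>{1..nat \<lfloor>x\<rfloor>}. 1 / beta n) - K1 * ln x - K2)
              \<in> O[at_top](\<lambda>x. x powr (-1 + \<epsilon>)))"
proof (intro exI conjI allI impI)
  show "(\<lambda>p::nat. if prime p then K1_factor p else 1) has_prod (\<Sum>d. G_beta d)"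
    by (rule euler_product_K1)
  fix \<epsilon> :: real assume \<epsilon>: "\<epsilon> > 0"
  define \<delta> where "\<delta> = min \<epsilon> 1 / 2"
  have \<delta>: "0 < \<delta>" "\<delta> \<le> 1/2" "2 * \<delta> - 1 \<le> -1 + \<epsilon>" unfolding \<delta>_def using \<epsilon> by auto
  have "\<forall>\<^sub>F x in at_top. norm ((\<Sum>n\<in>{1..nat \<lfloor>x\<rfloor>}. 1 / beta n) - (\<Sum>d. G_beta d) * ln x
          - (\<Sum>d. G_beta d * (euler_mascheroni - ln (real d))))
        \<le> (5 + 1 / \<delta>) * rankin_sum \<delta> * norm (x powr (2 * \<delta> - 1))"
    using eventually_ge_at_top[of "1::real"]
    by eventually_elim (simp add: error_bound[OF _ \<delta>(1,2)] del: One_nat_def)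
  then have "(\<lambda>x::real. (\<Sum>n\<in>{1..nat \<lfloor>x\<rfloor>}. 1 / beta n) - (\<Sum>d. G_beta d) * ln x
          - (\<Sum>d. G_beta d * (euler_mascheroni - ln (real d)))) \<in> O[at_top](\<lambda>x. x powr (2 * \<delta> - 1))"
    by (rule bigoI)
  also have "(\<lambda>x::real. x powr (2 * \<delta> - 1)) \<in> O[at_top](\<lambda>x. x powr (-1 + \<epsilon>))"
    using \<delta>(3) by (subst powr_bigo_iff[OF filterlim_ident]) simp_all
  finally show "(\<lambda>x::real. (\<Sum>n\<in>{1..nat \<lfloor>x\<rfloor>}. 1 / beta n) - (\<Sum>d. G_beta d) * ln x
          - (\<Sum>d. G_beta d * (euler_mascheroni - ln (real d)))) \<in> O[at_top](\<lambda>x. x powr (-1 + \<epsilon>))" .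
qed

end
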